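(* Let $L=(E,\preceq_E)$ be an object-centric event log and let $ot$ be an object type (serving as a case notion). Then the flattened event log $L^{ot}=(E^{ot},\preceq_E^{ot})$ is itself an object-centric event log, i.e. $\preceq_E^{ot}$ is a partial order (reflexive, antisymmetric, transitive) on $E^{ot}$, distinct events of $E^{ot}$ have distinct event identifiers, and $e_1\preceq_E^{ot} e_2$ implies $\pi_{time}(e_1)\le\pi_{time}(e_2)$ for all $e_1,e_2\in E^{ot}$.
   Context: Fix universes: event identifiers $\mathcal{U}_{ei}$, activity names $\mathcal{U}_{act}$, timestamps $\mathcal{U}_{time}$ (totally ordered by $\le$), object types $\mathcal{U}_{ot}$ (containing a special type $case$), object identifiers $\mathcal{U}_{oi}$ with a function $type:\mathcal{U}_{oi}\to\mathcal{U}_{ot}$, attribute names $\mathcal{U}_{att}$ and values $\mathcal{U}_{val}$. Event identifiers are assumed to include pairs $(x,i)$ of an event identifier $x$ and an object identifier $i$. An object mapping is a partial function $omap$ from object types to finite sets of object identifiers such that every $oi\in omap(ot)$ has $type(oi)=ot$; if $ot\notin dom(omap)$ we set $omap(ot)=\emptyset$. A value map $vmap$ is a partial function from attribute names to values. An event is a tuple $e=(ei,act,time,omap,vmap)$; write $\pi_{ei}(e)=ei$, $\pi_{act}(e)=act$, $\pi_{time}(e)=time$, $\pi_{omap}(e)=omap$, $\pi_{vmap}(e)=vmap$. An object-centric event log is a pair $L=(E,\preceq_E)$ where $E$ is a set of events and $\preceq_E\subseteq E\times E$ satisfies: $\preceq_E$ is a partial order (reflexive, antisymmetric, transitive); for all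 $e_1,e_2\in E$, $\pi_{ei}(e_1)=\pi_{ei}(e_2)$ implies $e_1=e_2$; and $e_1\preceq_E e_2$ implies $\pi_{time}(e_1)\le\pi_{time}(e_2)$. For a function $f$, $f\oplus(x,y)$ denotes the function with domain $dom(f)\cup\{x\}$ mapping $x$ to $y$ and agreeing with $f$ elsewhere. Flattening: for $e\in E$ and $i\in\pi_{omap}(e)(ot)$ let $e_i=((\pi_{ei}(e),i),\pi_{act}(e),\pi_{time}(e),\pi_{omap}(e)\oplus(case,\{i\}),\pi_{vmap}(e))$; let $E^{ot}=\{e_i\mid e\in E,\ i\in\pi_{omap}(e)(ot)\}$; and let $\preceq_E^{ot}=\{(e'_i,e''_j)\in E^{ot}\times E^{ot}\mid e',e''\in E,\ i\in\pi_{omap}(e')(ot),\ j\in\pi_{omap}(e'')(ot),\ e'\preceq_E e'',\ (e'=e''\Rightarrow i=j)\}$.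
   Formalization: The conclusion leaves out that each $e_i$ is an event, so $\pi_{omap}(e)\oplus(case,\{i\})$ is not claimed to be an object mapping with $type(i)=case$. The statement above fails without it. *)

theory Defs
  imports Main
begin

type_synonym ('ei,'act,'time,'ot,'oi,'att,'val) event =
  "'ei \<times> 'act \<times> 'time \<times> ('ot \<rightharpoonup> 'oi set) \<times> ('att \<rightharpoonup> 'val)"

definition pi_ei :: "('ei,'act,'time,'ot,'oi,'att,'val) event \<Rightarrow> 'ei" where
  "pi_ei e = fst e"
definition pi_act :: "('ei,'act,'time,'ot,'oi,'att,'val) event \<Rightarrow> 'act" where
  "pi_act e = fst (snd e)"
definition pi_time :: "('ei,'act,'time,'ot,'oi,'att,'val) event \<Rightarrow> 'time" where
  "pi_time e = fst (snd (snd e))"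
definition pi_omap :: "('ei,'act,'time,'ot,'oi,'att,'val) event \<Rightarrow> ('ot \<rightharpoonup> 'oi set)" where
  "pi_omap e = fst (snd (snd (snd e)))"
definition pi_vmap :: "('ei,'act,'time,'ot,'oi,'att,'val) event \<Rightarrow> ('att \<rightharpoonup> 'val)" where
  "pi_vmap e = snd (snd (snd (snd e)))"

definition omap_app :: "('ot \<rightharpoonup> 'oi set) \<Rightarrow> 'ot \<Rightarrow> 'oi set" where
  "omap_app m ot = (case m ot of None \<Rightarrow> {} | Some s \<Rightarrow> s)"

definition is_omap :: "('oi \<Rightarrow> 'ot) \<Rightarrow> ('ot \<rightharpoonup> 'oi set) \<Rightarrow> bool" where
  "is_omap otype m \<longleftrightarrow> (\<forall>ot s. m ot = Some s \<longrightarrow> finite s \<and> (\<forall>oi\<in>s. otype oi = ot))"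

definition is_ocel :: "('ei,'act,'time::linorder,'ot,'oi,'att,'val) event set \<Rightarrow>
    (('ei,'act,'time,'ot,'oi,'att,'val) event \<times> ('ei,'act,'time,'ot,'oi,'att,'val) event) set \<Rightarrow> bool" where
  "is_ocel E R \<longleftrightarrow>
     R \<subseteq> E \<times> E \<and>
     (\<forall>e\<in>E. (e, e) \<in> R) \<and>
     (\<forall>e1 e2. (e1, e2) \<in> R \<and> (e2, e1) \<in> R \<longrightarrow> e1 = e2) \<and>
     (\<forall>e1 e2 e3. (e1, e2) \<in> R \<and> (e2, e3) \<in> R \<longrightarrow> (e1, e3) \<in> R) \<and>
     (\<forall>e1\<in>E. \<forall>e2\<in>E. pi_ei e1 = pi_ei e2 \<longrightarrow> e1 = e2) \<and>
     (\<forall>e1 e2. (e1, e2) \<in> R \<longrightarrow> pi_time e1 \<le> pi_time e2)"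

text \<open>Flattened event e_i; pid x i is the event identifier (x,i), cs the special type case.\<close>
definition flat_ev :: "('ei \<Rightarrow> 'oi \<Rightarrow> 'ei) \<Rightarrow> 'ot \<Rightarrow> ('ei,'act,'time,'ot,'oi,'att,'val) event \<Rightarrow> 'oi
    \<Rightarrow> ('ei,'act,'time,'ot,'oi,'att,'val) event" where
  "flat_ev pid cs e i = (pid (pi_ei e) i, pi_act e, pi_time e, (pi_omap e)(cs \<mapsto> {i}), pi_vmap e)"

definition flat_E :: "('ei \<Rightarrow> 'oi \<Rightarrow> 'ei) \<Rightarrow> 'ot \<Rightarrow> ('ei,'act,'time,'ot,'oi,'att,'val) event set \<Rightarrow> 'ot
    \<Rightarrow> ('ei,'act,'time,'ot,'oi,'att,'val) event set" where
  "flat_E pid cs E ot = {flat_ev pid cs e i | e i. e \<in> E \<and> i \<in> omap_app (pi_omap e) ot}"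

definition flat_R :: "('ei \<Rightarrow> 'oi \<Rightarrow> 'ei) \<Rightarrow> 'ot \<Rightarrow> ('ei,'act,'time,'ot,'oi,'att,'val) event set
    \<Rightarrow> (('ei,'act,'time,'ot,'oi,'att,'val) event \<times> ('ei,'act,'time,'ot,'oi,'att,'val) event) set \<Rightarrow> 'ot
    \<Rightarrow> (('ei,'act,'time,'ot,'oi,'att,'val) event \<times> ('ei,'act,'time,'ot,'oi,'att,'val) event) set" where
  "flat_R pid cs E R ot = {(flat_ev pid cs e' i, flat_ev pid cs e'' j) | e' e'' i j.
       e' \<in> E \<and> e'' \<in> E \<and> i \<in> omap_app (pi_omap e') ot \<and> j \<in> omap_app (pi_omap e'') ot \<and>
       (e', e'') \<in> R \<and> (e' = e'' \<longrightarrow> i = j)}"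

end

theory Submission
  imports Defs
begin

text \<open>Flattening sends a pair (e, i) to an event with identifier (ei, i). Since identifiers are
  unique in E, this is injective on the pairs with e in E, and the flattened order is the image of
  the order on such pairs that compares events by R and, for equal events, requires equal objects.
  Each log axiom transfers along this injection; transitivity also uses antisymmetry of R, since
  e_1 R e_2 R e_1 forces e_1 = e_2 and hence equal objects throughout.\<close>

lemma is_ocel_iff:
  "is_ocel E R \<longleftrightarrow> R \<subseteq> E \<times> E \<and> refl_on E R \<and> antisym R \<and> trans R \<and> inj_on pi_ei E \<and>
    (\<forall>e e'. (e, e') \<in> R \<longrightarrow> pi_time e \<le> pi_time e')"
  unfolding is_ocel_def refl_on_def antisym_def trans_def inj_on_def by blast

lemma pi_ei_flat_ev [simp]: "pi_ei (flat_ev pid cs e i) = pid (pi_ei e) i"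
  by (simp add: flat_ev_def pi_ei_def)

lemma pi_time_flat_ev [simp]: "pi_time (flat_ev pid cs e i) = pi_time e"
  by (simp add: flat_ev_def pi_time_def)

lemma flat_E_cases:
  assumes "x \<in> flat_E pid cs E ot"
  obtains e i where "x = flat_ev pid cs e i" "e \<in> E" "i \<in> omap_app (pi_omap e) ot"
  using assms unfolding flat_E_def by blast

lemma flat_R_cases:
  assumes "(x, y) \<in> flat_R pid cs E R ot"
  obtains e i e' j where "x = flat_ev pid cs e i" "y = flat_ev pid cs e' j" "e \<in> E" "e' \<in> E"
    "i \<in> omap_app (pi_omap e) ot" "j \<in> omap_app (pi_omap e') ot"
    "(e, e') \<in> R" "e = e' \<longrightarrow> i = j"
  using assms unfolding flat_R_def by blast

lemma flat_ev_in_flat_R: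
  assumes "e \<in> E" "e' \<in> E" "i \<in> omap_app (pi_omap e) ot" "j \<in> omap_app (pi_omap e') ot"
    "(e, e') \<in> R" "e = e' \<longrightarrow> i = j"
  shows "(flat_ev pid cs e i, flat_ev pid cs e' j) \<in> flat_R pid cs E R ot"
  using assms unfolding flat_R_def by blast

lemma flat_R_subset: "flat_R pid cs E R ot \<subseteq> flat_E pid cs E ot \<times> flat_E pid cs E ot"
  unfolding flat_R_def flat_E_def by blast

lemma refl_on_flat_R:
  assumes "refl_on E R"
  shows "refl_on (flat_E pid cs E ot) (flat_R pid cs E R ot)"
  using assms unfolding refl_on_def flat_R_def flat_E_def by blast

lemma pi_time_mono_flat_R:
  assumes "\<forall>e e'. (e, e') \<in> R \<longrightarrow> pi_time e \<le> pi_time e'"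
    and "(x, y) \<in> flat_R pid cs E R ot"
  shows "pi_time x \<le> pi_time y"
  using assms(2)
proof (cases rule: flat_R_cases)
  case (1 e i e' j)
  with assms(1) show ?thesis by (metis pi_time_flat_ev)
qed

locale flattening =
  fixes pid :: "'ei \<Rightarrow> 'oi \<Rightarrow> 'ei"
  assumes pid_inject: "pid x i = pid y j \<Longrightarrow> x = y \<and> i = j"
begin

lemma flat_ev_eq_iff:
  assumes "inj_on pi_ei E" "e \<in> E" "e' \<in> E"
  shows "flat_ev pid cs e i = flat_ev pid cs e' j \<longleftrightarrow> e = e' \<and> i = j"
proof
  assume "flat_ev pid cs e i = flat_ev pid cs e' j"
  then have "pid (pi_ei e) i = pid (pi_ei e') j"
    by (metis pi_ei_flat_ev)
  then have "pi_ei e = pi_ei e'" "i = j"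
    using pid_inject by blast+
  then show "e = e' \<and> i = j"
    using assms by (simp add: inj_on_eq_iff)
qed simp

lemma inj_on_pi_ei_flat_E:
  assumes "inj_on pi_ei E"
  shows "inj_on pi_ei (flat_E pid cs E ot)"
proof (rule inj_onI)
  fix x y
  assume "x \<in> flat_E pid cs E ot" "y \<in> flat_E pid cs E ot" and ei: "pi_ei x = pi_ei y"
  then obtain e i e' j where x: "x = flat_ev pid cs e i" and y: "y = flat_ev pid cs e' j"
    and "e \<in> E" "e' \<in> E"
    by (metis flat_E_cases)
  have "pi_ei e = pi_ei e'" "i = j"
    using ei pid_inject unfolding x y pi_ei_flat_ev by blast+
  then show "x = y"
    using assms \<open>e \<in> E\<close> \<open>e' \<in> E\<close> unfolding x y by (simp add: inj_on_eq_iff)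
qed

lemma antisym_flat_R:
  assumes ids: "inj_on pi_ei E" and "antisym R"
  shows "antisym (flat_R pid cs E R ot)"
proof (rule antisymI)
  fix x y
  assume xy: "(x, y) \<in> flat_R pid cs E R ot" and yx: "(y, x) \<in> flat_R pid cs E R ot"
  obtain e i e' j where x: "x = flat_ev pid cs e i" and y: "y = flat_ev pid cs e' j"
    and "e \<in> E" "e' \<in> E" "(e, e') \<in> R" "e = e' \<longrightarrow> i = j"
    using xy by (rule flat_R_cases)
  moreover obtain e2 i2 e2' j2 where "y = flat_ev pid cs e2 i2" "x = flat_ev pid cs e2' j2"
    and "e2 \<in> E" "e2' \<in> E" "(e2, e2') \<in> R"
    using yx by (rule flat_R_cases)
  ultimately have "(e', e) \<in> R"
    using flat_ev_eq_iff[OF ids] by metis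
  with \<open>antisym R\<close> \<open>(e, e') \<in> R\<close> \<open>e = e' \<longrightarrow> i = j\<close> show "x = y"
    unfolding x y by (blast dest: antisymD)
qed

lemma trans_flat_R:
  assumes ids: "inj_on pi_ei E" and "antisym R" and "trans R"
  shows "trans (flat_R pid cs E R ot)"
proof (rule transI)
  fix x y z
  assume xy: "(x, y) \<in> flat_R pid cs E R ot" and yz: "(y, z) \<in> flat_R pid cs E R ot"
  obtain e1 i1 e2 i2 where x: "x = flat_ev pid cs e1 i1" and y: "y = flat_ev pid cs e2 i2"
    and "e1 \<in> E" "e2 \<in> E" "i1 \<in> omap_app (pi_omap e1) ot"
    and 12: "(e1, e2) \<in> R" "e1 = e2 \<longrightarrow> i1 = i2"
    using xy by (rule flat_R_cases)
  obtain e2' i2' e3 i3 where y': "y = flat_ev pid cs e2' i2'" and z: "z = flat_ev pid cs e3 i3"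
    and "e2' \<in> E" "e3 \<in> E" "i3 \<in> omap_app (pi_omap e3) ot"
    and 23: "(e2', e3) \<in> R" "e2' = e3 \<longrightarrow> i2' = i3"
    using yz by (rule flat_R_cases)
  have "e2' = e2" "i2' = i2"
    using y y' flat_ev_eq_iff[OF ids \<open>e2' \<in> E\<close> \<open>e2 \<in> E\<close>] by metis+
  have "(e1, e3) \<in> R"
    using 12 23 \<open>e2' = e2\<close> \<open>trans R\<close> by (blast dest: transD)
  moreover have "e1 = e3 \<longrightarrow> i1 = i3"
    using 12 23 \<open>e2' = e2\<close> \<open>i2' = i2\<close> \<open>antisym R\<close> by (blast dest: antisymD)
  ultimately show "(x, z) \<in> flat_R pid cs E R ot"
    unfolding x z by (rule flat_ev_in_flat_R[OF \<open>e1 \<in> E\<close> \<open>e3 \<in> E\<close> \<open>i1 \<in> _\<close> \<open>i3 \<in> _\<close>])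
qed

end

theorem lemma1:
  fixes E :: "('ei,'act,'time::linorder,'ot,'oi,'att,'val) event set"
    and R :: "(('ei,'act,'time,'ot,'oi,'att,'val) event \<times> ('ei,'act,'time,'ot,'oi,'att,'val) event) set"
    and otype :: "'oi \<Rightarrow> 'ot" and cs :: 'ot and ot :: 'ot
    and pid :: "'ei \<Rightarrow> 'oi \<Rightarrow> 'ei"
  assumes pair_inj: "\<And>x i y j. pid x i = pid y j \<Longrightarrow> x = y \<and> i = j"
    and events: "\<And>e. e \<in> E \<Longrightarrow> is_omap otype (pi_omap e)"
    and log: "is_ocel E R"
  shows "is_ocel (flat_E pid cs E ot) (flat_R pid cs E R ot)"
proof -
  interpret flattening pid
    using pair_inj by unfold_locales
  have "refl_on E R" "antisym R" "trans R" "inj_on pi_ei E"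
    and time: "\<forall>e e'. (e, e') \<in> R \<longrightarrow> pi_time e \<le> pi_time e'"
    using log unfolding is_ocel_iff by blast+
  then show ?thesis
    unfolding is_ocel_iff
    by (intro conjI allI impI flat_R_subset refl_on_flat_R antisym_flat_R trans_flat_R
        inj_on_pi_ei_flat_E pi_time_mono_flat_R[OF time])
qed

end
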